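(* Let $C$ be a binary linear constant weight code of dimension at least $2$. Then $\mathrm{PAut}(C)$ has a subgroup isomorphic to $S_3$.
   Context: A binary linear constant weight code of weight $w$ is an $\mathbb{F}_2$-subspace of $\mathbb{F}_2^n$ all of whose non-zero vectors have exactly $w$ coordinates equal to $1$. $S_n$ acts on $\mathbb{F}_2^n$ by $\sigma(v_1,\dots,v_n)=(v_{\sigma^{-1}(1)},\dots,v_{\sigma^{-1}(n)})$, and $\mathrm{PAut}(C)=\{\sigma\in S_n:\sigma(C)=C\}$. *)

theory Defs
  imports "HOL-Analysis.Analysis" "HOL-Library.Z2" "HOL-Algebra.Sym_Groups" "HOL-Algebra.Bij"
begin

text \<open>Vectors of \<open>F_2^n\<close> are \<open>bit ^ 'n\<close> with a finite index type \<open>'n\<close> (\<open>n = CARD('n)\<close>).\<close>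

definition hweight :: "bit ^ 'n::finite \<Rightarrow> nat" where
  "hweight v = card {i. v $ i = 1}"

definition lin_const_weight_code :: "nat \<Rightarrow> (bit ^ 'n::finite) set \<Rightarrow> bool" where
  "lin_const_weight_code w C \<longleftrightarrow> vec.subspace C \<and> (\<forall>v\<in>C. v \<noteq> 0 \<longrightarrow> hweight v = w)"

definition perm_act :: "('n::finite \<Rightarrow> 'n) \<Rightarrow> bit ^ 'n \<Rightarrow> bit ^ 'n" where
  "perm_act \<sigma> v = (\<chi> i. v $ (inv_into UNIV \<sigma> i))"

definition PAut :: "(bit ^ 'n::finite) set \<Rightarrow> ('n \<Rightarrow> 'n) set" where
  "PAut C = {\<sigma>. \<sigma> permutes (UNIV :: 'n set) \<and> perm_act \<sigma> ` C = C}"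

definition PAut_group :: "(bit ^ 'n::finite) set \<Rightarrow> ('n \<Rightarrow> 'n) monoid" where
  "PAut_group C = (BijGroup (UNIV :: 'n set)) \<lparr>carrier := PAut C\<rparr>"

end

theory Submission
  imports Defs
begin

text \<open>
  Call the restriction to \<open>C\<close> of the \<open>i\<close>-th coordinate functional the column of \<open>i\<close>.
  Double counting the weights of the codewords on which a nonzero functional \<open>f\<close> of \<open>C\<close>
  takes the value \<open>1\<close> shows that, in a constant weight code, the number of coordinates with
  column \<open>f\<close> is the same for every nonzero \<open>f\<close>. A linear automorphism \<open>A\<close> of \<open>C\<close> permutes
  the nonzero functionals by \<open>f \<mapsto> f \<circ> A\<close>, so it is induced by a coordinate permutation; numbering
  the coordinates inside each column class makes the choice of this permutation multiplicative.
  Finally two independent codewords \<open>u, v\<close> with dual functionals \<open>\<alpha>, \<beta>\<close> split \<open>C\<close> as the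
  plane spanned by \<open>u, v\<close> plus \<open>ker \<alpha> \<inter> ker \<beta>\<close>, and \<open>S\<^sub>3 = GL(2, 2)\<close>, acting on the
  plane and trivially on the complement, embeds into the linear automorphisms of \<open>C\<close>.
\<close>

instance bit :: finite
proof
  have "(UNIV :: bit set) = {0, 1}"
    using bit_not_zero_iff by blast
  then show "finite (UNIV :: bit set)" by (metis finite.emptyI finite.insertI)
qed

lemma vec_bit_add_self [simp]: "(x :: bit ^ 'n) + x = 0"
  by (simp add: vec_eq_iff)

definition additive_on :: "'a::plus set \<Rightarrow> ('a \<Rightarrow> 'b::plus) \<Rightarrow> bool" where
  "additive_on S f \<longleftrightarrow> (\<forall>x\<in>S. \<forall>y\<in>S. f (x + y) = f x + f y)"

definition linear_aut_on :: "'a::plus set \<Rightarrow> ('a \<Rightarrow> 'a) \<Rightarrow> bool" where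
  "linear_aut_on S A \<longleftrightarrow> additive_on S A \<and> A ` S = S"

lemma additive_on_zero:
  fixes f :: "'a::monoid_add \<Rightarrow> 'b::cancel_comm_monoid_add"
  assumes "additive_on S f" and "0 \<in> S"
  shows "f 0 = 0"
proof -
  have "f 0 = f 0 + f 0"
    using assms unfolding additive_on_def by (metis add_0)
  then show ?thesis by simp
qed

lemma linear_aut_on_mem: "linear_aut_on S A \<Longrightarrow> x \<in> S \<Longrightarrow> A x \<in> S"
  unfolding linear_aut_on_def by blast

lemma linear_aut_on_add:
  "linear_aut_on S A \<Longrightarrow> x \<in> S \<Longrightarrow> y \<in> S \<Longrightarrow> A (x + y) = A x + A y"
  unfolding linear_aut_on_def additive_on_def by blast

lemma linear_aut_on_comp:
  assumes "linear_aut_on S A" and "linear_aut_on S B"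
  shows "linear_aut_on S (A \<circ> B)"
proof -
  have "B x \<in> S" if "x \<in> S" for x
    using assms(2) that by (rule linear_aut_on_mem)
  moreover have "(A \<circ> B) ` S = A ` (B ` S)"
    by (rule image_comp[symmetric])
  ultimately show ?thesis
    using assms unfolding linear_aut_on_def additive_on_def by simp
qed

lemma Bij_UNIV_iff: "f \<in> Bij UNIV \<longleftrightarrow> bij f"
  by (simp add: Bij_def extensional_def)

lemma BijGroup_UNIV_mult:
  "\<sigma> \<in> Bij UNIV \<Longrightarrow> \<tau> \<in> Bij UNIV \<Longrightarrow> \<sigma> \<otimes>\<^bsub>BijGroup UNIV\<^esub> \<tau> = \<sigma> \<circ> \<tau>"
  by (simp add: BijGroup_def compose_def restrict_UNIV comp_def)

lemma perm_act_id: "perm_act id v = v"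
  by (simp add: perm_act_def inv_id)

lemma perm_act_comp:
  assumes "bij \<sigma>" and "bij \<tau>"
  shows "perm_act (\<sigma> \<circ> \<tau>) v = perm_act \<sigma> (perm_act \<tau> v)"
  using assms by (simp add: perm_act_def o_inv_distrib)

lemma PAut_imp_bij: "\<sigma> \<in> PAut C \<Longrightarrow> bij \<sigma>"
  by (auto simp: PAut_def permutes_bij)

lemma PAut_inv_into:
  assumes "\<sigma> \<in> PAut C"
  shows "inv_into UNIV \<sigma> \<in> PAut C"
proof -
  have \<sigma>: "\<sigma> permutes UNIV" "bij \<sigma>" "perm_act \<sigma> ` C = C"
    using assms by (auto simp: PAut_def permutes_bij)
  have cancel: "perm_act (inv_into UNIV \<sigma>) (perm_act \<sigma> v) = v" for v
  proof -
    have "perm_act (inv_into UNIV \<sigma>) (perm_act \<sigma> v) = perm_act (inv_into UNIV \<sigma> \<circ> \<sigma>) v"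
      using \<sigma>(2) by (simp add: perm_act_comp bij_imp_bij_inv)
    also have "inv_into UNIV \<sigma> \<circ> \<sigma> = id"
      using \<sigma>(2) by (simp add: bij_is_inj inv_o_cancel)
    finally show ?thesis by (simp only: perm_act_id)
  qed
  have "perm_act (inv_into UNIV \<sigma>) ` C = perm_act (inv_into UNIV \<sigma>) ` perm_act \<sigma> ` C"
    using \<sigma>(3) by simp
  also have "\<dots> = C"
    by (simp add: image_image cancel)
  finally have "perm_act (inv_into UNIV \<sigma>) ` C = C" .
  then show ?thesis
    using \<sigma>(1) by (simp add: PAut_def permutes_inv)
qed

lemma subgroup_PAut: "subgroup (PAut C) (BijGroup UNIV)"
proof (rule group.subgroupI[OF group_BijGroup])
  note bij = PAut_imp_bij[of _ C]
  then show "PAut C \<subseteq> carrier (BijGroup UNIV)"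
    by (auto simp: BijGroup_def Bij_UNIV_iff)
  show "PAut C \<noteq> {}"
    by (auto simp: PAut_def perm_act_id permutes_id intro!: exI[of _ id])
  show "inv\<^bsub>BijGroup UNIV\<^esub> \<sigma> \<in> PAut C" if "\<sigma> \<in> PAut C" for \<sigma>
    using that bij[OF that] by (simp add: inv_BijGroup Bij_UNIV_iff restrict_UNIV PAut_inv_into)
  show "\<sigma> \<otimes>\<^bsub>BijGroup UNIV\<^esub> \<tau> \<in> PAut C" if "\<sigma> \<in> PAut C" "\<tau> \<in> PAut C" for \<sigma> \<tau>
  proof -
    have "perm_act (\<sigma> \<circ> \<tau>) ` C = C"
      using that bij[OF that(1)] bij[OF that(2)]
      by (simp add: PAut_def perm_act_comp image_image[symmetric])
    then show ?thesis
      using that bij[OF that(1)] bij[OF that(2)]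
      by (simp add: PAut_def BijGroup_UNIV_mult Bij_UNIV_iff permutes_compose)
  qed
qed

lemma group_PAut_group: "group (PAut_group C)"
  unfolding PAut_group_def by (rule group.subgroup_imp_group[OF group_BijGroup subgroup_PAut])

lemma PAut_group_mult: "\<sigma> \<in> PAut C \<Longrightarrow> \<tau> \<in> PAut C \<Longrightarrow> \<sigma> \<otimes>\<^bsub>PAut_group C\<^esub> \<tau> = \<sigma> \<circ> \<tau>"
  by (simp add: PAut_group_def BijGroup_UNIV_mult Bij_UNIV_iff PAut_imp_bij)

lemma injective_hom_imp_subgroup_iso:
  assumes "group G" "group H" "h \<in> hom G H" "inj_on h (carrier G)"
  shows "subgroup (h ` carrier G) H \<and> H\<lparr>carrier := h ` carrier G\<rparr> \<cong> G"
proof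
  show "subgroup (h ` carrier G) H"
    using assms by (intro group_hom.img_is_subgroup) (simp add: group_hom_def group_hom_axioms_def)
  have "h \<in> iso G (H\<lparr>carrier := h ` carrier G\<rparr>)"
    using assms(3,4) by (intro isoI) (auto simp: hom_def bij_betw_def)
  then show "H\<lparr>carrier := h ` carrier G\<rparr> \<cong> G"
    by (intro group.iso_sym[OF assms(1)] is_isoI)
qed

section \<open>Column multiplicities of a constant weight code\<close>

definition code_column :: "(bit ^ 'n) set \<Rightarrow> 'n \<Rightarrow> bit ^ 'n \<Rightarrow> bit" where
  "code_column C i = (\<lambda>c\<in>C. c $ i)"

lemma column_eq_iff: "code_column C i = (\<lambda>c\<in>C. f c) \<longleftrightarrow> (\<forall>c\<in>C. c $ i = f c)"
  by (auto simp: code_column_def fun_eq_iff)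

definition ones :: "(bit ^ 'n) set \<Rightarrow> (bit ^ 'n \<Rightarrow> bit) \<Rightarrow> (bit ^ 'n) set" where
  "ones C f = {c \<in> C. f c = 1}"

locale binary_code =
  fixes C :: "(bit ^ 'n::finite) set"
  assumes subspace: "vec.subspace C"
begin

lemma add_mem: "x \<in> C \<Longrightarrow> y \<in> C \<Longrightarrow> x + y \<in> C"
  using subspace vec.subspace_add by blast

lemma zero_mem: "0 \<in> C"
  using subspace vec.subspace_0 by blast

lemma additive_on_coordinate: "additive_on C (\<lambda>c. c $ i)"
  by (simp add: additive_on_def)

lemma ex_mem_separating:
  fixes f g :: "bit ^ 'n \<Rightarrow> bit"
  assumes f: "additive_on C f" and g: "additive_on C g"
    and c0: "c0 \<in> C" "g c0 = 1" and c: "c \<in> C" "f c \<noteq> g c"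
  shows "\<exists>c1\<in>C. f c1 = 0 \<and> g c1 = 1"
proof (cases "f c = 0")
  case True
  with c show ?thesis by auto
next
  case False
  then have "f c = 1" "g c = 0" using c by auto
  show ?thesis
  proof (cases "f c0 = 0")
    case True
    with c0 show ?thesis by auto
  next
    case False
    then have "f (c + c0) = 0" "g (c + c0) = 1"
      using \<open>f c = 1\<close> \<open>g c = 0\<close> c0 c f g by (simp_all add: additive_on_def)
    with c c0 show ?thesis using add_mem by blast
  qed
qed

text \<open>Translation by a codeword on which \<open>f\<close> vanishes and \<open>g\<close> does not swaps the two halves
  of \<open>ones C f\<close> cut out by \<open>g\<close>.\<close>
lemma card_ones_eq_double_card_ones_inter:
  fixes f g :: "bit ^ 'n \<Rightarrow> bit"
  assumes f: "additive_on C f" and g: "additive_on C g"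
    and c0: "c0 \<in> C" "g c0 = 1" and c: "c \<in> C" "f c \<noteq> g c"
  shows "card (ones C f) = 2 * card (ones C f \<inter> ones C g)"
proof -
  have f_add: "f (x + y) = f x + f y" and g_add: "g (x + y) = g x + g y" if "x \<in> C" "y \<in> C" for x y
    using f g that unfolding additive_on_def by blast+
  obtain c1 where c1: "c1 \<in> C" "f c1 = 0" "g c1 = 1"
    using ex_mem_separating[OF assms] by blast
  let ?A = "ones C f \<inter> ones C g" and ?B = "ones C f - ones C g"
  have "x + c1 \<in> ?B" if "x \<in> ?A" for x
    using that c1 add_mem f_add[of x c1] g_add[of x c1] by (auto simp: ones_def)
  moreover have "x + c1 \<in> ?A" if "x \<in> ?B" for x
    using that c1 add_mem f_add[of x c1] g_add[of x c1] by (auto simp: ones_def)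
  ultimately have "bij_betw (\<lambda>x. x + c1) ?A ?B"
    by (intro bij_betw_byWitness[where f' = "\<lambda>x. x + c1"]) (auto simp: add.assoc)
  then have "card ?B = card ?A" by (simp add: bij_betw_same_card)
  moreover have "card (ones C f) = card ?A + card ?B"
    by (rule card_Int_Diff) simp
  ultimately show ?thesis by simp
qed

lemma sum_hweight_ones:
  "(\<Sum>c\<in>ones C f. hweight c) = (\<Sum>i\<in>UNIV. card (ones C f \<inter> ones C (\<lambda>c. c $ i)))"
proof -
  have "(\<Sum>c\<in>ones C f. hweight c) = (\<Sum>c\<in>ones C f. \<Sum>i\<in>UNIV. of_bool (c $ i = 1))"
    unfolding hweight_def by simp
  also have "\<dots> = (\<Sum>i\<in>UNIV. \<Sum>c\<in>ones C f. of_bool (c $ i = 1))"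
    by (rule sum.swap)
  also have "\<dots> = (\<Sum>i\<in>UNIV. card (ones C f \<inter> ones C (\<lambda>c. c $ i)))"
  proof (rule sum.cong)
    fix i
    have "ones C f \<inter> ones C (\<lambda>c. c $ i) = ones C f \<inter> {c. c $ i = 1}"
      by (auto simp: ones_def)
    then show "(\<Sum>c\<in>ones C f. of_bool (c $ i = 1)) = card (ones C f \<inter> ones C (\<lambda>c. c $ i))"
      by simp
  qed simp
  finally show ?thesis .
qed

definition column_class :: "(bit ^ 'n \<Rightarrow> bit) \<Rightarrow> 'n set" where
  "column_class f = {i. code_column C i = f}"

lemma mem_column_class_iff: "i \<in> column_class (\<lambda>c\<in>C. f c) \<longleftrightarrow> (\<forall>c\<in>C. c $ i = f c)"
  by (simp add: column_class_def column_eq_iff)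

lemma double_card_ones_inter_coordinate:
  assumes f: "additive_on C f" and c0: "c0 \<in> C" "f c0 = 1"
  shows "2 * card (ones C f \<inter> ones C (\<lambda>c. c $ i))
    = card (ones C f) * (of_bool (i \<in> column_class (\<lambda>c\<in>C. f c))
        + of_bool (i \<notin> column_class (\<lambda>c\<in>C. 0)))"
proof (cases "i \<in> column_class (\<lambda>c\<in>C. f c)")
  case True
  then have "ones C f \<inter> ones C (\<lambda>c. c $ i) = ones C f"
    by (auto simp: mem_column_class_iff ones_def)
  moreover have "i \<notin> column_class (\<lambda>c\<in>C. 0)"
    using True c0 by (auto simp: mem_column_class_iff)
  ultimately show ?thesis using True by simp
next
  case notF: False
  show ?thesis
  proof (cases "i \<in> column_class (\<lambda>c\<in>C. 0)")
    case True
    then have "ones C f \<inter> ones C (\<lambda>c. c $ i) = {}"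
      by (auto simp: mem_column_class_iff ones_def)
    with True notF show ?thesis by simp
  next
    case False
    then obtain c1 where "c1 \<in> C" "c1 $ i = 1"
      by (auto simp: mem_column_class_iff)
    moreover obtain c2 where "c2 \<in> C" "f c2 \<noteq> c2 $ i"
      using notF by (auto simp: mem_column_class_iff)
    ultimately have "card (ones C f) = 2 * card (ones C f \<inter> ones C (\<lambda>c. c $ i))"
      by (intro card_ones_eq_double_card_ones_inter f additive_on_coordinate) auto
    with notF False show ?thesis by simp
  qed
qed

end

locale const_weight_code = binary_code C for C :: "(bit ^ 'n::finite) set" +
  fixes w :: nat
  assumes hweight_eq: "c \<in> C \<Longrightarrow> c \<noteq> 0 \<Longrightarrow> hweight c = w"
begin

lemma sum_hweight_ones_additive:
  assumes "additive_on C f"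
  shows "(\<Sum>c\<in>ones C f. hweight c) = w * card (ones C f)"
proof -
  have "f 0 = 0" using additive_on_zero[OF assms zero_mem] .
  then have "hweight c = w" if "c \<in> ones C f" for c
    using that hweight_eq[of c] by (fastforce simp: ones_def)
  then show ?thesis by simp
qed

text \<open>Double counting the pairs \<open>(c, i)\<close> with \<open>c \<in> ones C f\<close> and \<open>c $ i = 1\<close>.\<close>
lemma card_column_class:
  assumes f: "additive_on C f" and c0: "c0 \<in> C" "f c0 = 1"
  shows "card (column_class (\<lambda>c\<in>C. f c)) + CARD('n) = 2 * w + card (column_class (\<lambda>c\<in>C. 0))"
proof -
  define F where "F = column_class (\<lambda>c\<in>C. f c)"
  define Z where "Z = column_class (\<lambda>c\<in>C. 0)"
  define e where "e = card (ones C f)"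
  have "e > 0" unfolding e_def using c0 by (auto simp: ones_def card_gt_0_iff)
  have "e * (2 * w) = 2 * (\<Sum>c\<in>ones C f. hweight c)"
    by (simp add: sum_hweight_ones_additive[OF f] e_def)
  also have "\<dots> = (\<Sum>i\<in>UNIV. e * (of_bool (i \<in> F) + of_bool (i \<notin> Z)))"
    by (simp add: sum_hweight_ones sum_distrib_left double_card_ones_inter_coordinate[OF f c0]
        F_def Z_def e_def)
  also have "\<dots> = e * (card F + card (- Z))"
    by (simp add: sum_distrib_left[symmetric] sum.distrib Compl_eq)
  finally have "2 * w = card F + card (- Z)" using \<open>e > 0\<close> by simp
  moreover have "card (- Z) + card Z = CARD('n)"
    using card_Un_disjoint[of "- Z" Z] by (simp add: Compl_partition2)
  ultimately show ?thesis unfolding F_def Z_def by linarith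
qed

corollary card_column_class_eq:
  assumes "additive_on C f" "c0 \<in> C" "f c0 = 1" and "additive_on C g" "c1 \<in> C" "g c1 = 1"
  shows "card (column_class (\<lambda>c\<in>C. f c)) = card (column_class (\<lambda>c\<in>C. g c))"
  using card_column_class[OF assms(1-3)] card_column_class[OF assms(4-6)] by simp

section \<open>Lifting linear automorphisms to coordinate permutations\<close>

definition enumeration :: "'a set \<Rightarrow> 'a \<Rightarrow> nat" where
  "enumeration S = (SOME e. bij_betw e S {0..<card S})"

lemma bij_betw_enumeration: "finite S \<Longrightarrow> bij_betw (enumeration S) S {0..<card S}"
  unfolding enumeration_def by (rule someI_ex[OF ex_bij_betw_finite_nat])

text \<open>\<open>pullback A\<close> sends the coordinate with column \<open>f\<close> and number \<open>r\<close> in its column class to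
  the coordinate with column \<open>f \<circ> A\<close> and the same number; it exists because the two column
  classes have the same size.\<close>
definition column_rank :: "'n \<Rightarrow> nat" where
  "column_rank i = enumeration (column_class (code_column C i)) i"

lemma column_rank_inj:
  assumes "code_column C j = code_column C j'" and "column_rank j = column_rank j'"
  shows "j = j'"
proof -
  have "inj_on (enumeration (column_class (code_column C j))) (column_class (code_column C j))"
    using bij_betw_enumeration[of "column_class (code_column C j)"] by (simp add: bij_betw_def)
  moreover have "j \<in> column_class (code_column C j)" "j' \<in> column_class (code_column C j)"
    using assms(1) by (simp_all add: column_class_def)
  ultimately show ?thesis using assms by (simp add: column_rank_def inj_on_eq_iff)
qed

lemma ex_column_rank:
  assumes "card (column_class f) = card (column_class (code_column C i))"
  shows "\<exists>j. code_column C j = f \<and> column_rank j = column_rank i"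
proof -
  have "i \<in> column_class (code_column C i)" by (simp add: column_class_def)
  then have "column_rank i \<in> {0..<card (column_class f)}"
    using bij_betw_enumeration[of "column_class (code_column C i)"] assms
    by (auto simp: column_rank_def bij_betw_def)
  then have "column_rank i \<in> enumeration (column_class f) ` column_class f"
    using bij_betw_enumeration[of "column_class f"] by (simp add: bij_betw_def)
  then obtain j where "column_rank i = enumeration (column_class f) j" "j \<in> column_class f"
    by (rule imageE)
  then show ?thesis by (auto simp: column_class_def column_rank_def)
qed

lemma card_column_class_linear_aut:
  assumes A: "linear_aut_on C A"
  shows "card (column_class (\<lambda>c\<in>C. A c $ i)) = card (column_class (code_column C i))"
proof (cases "\<forall>c\<in>C. c $ i = 0")
  case True
  then have "(\<lambda>c\<in>C. A c $ i) = code_column C i"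
    using linear_aut_on_mem[OF A] unfolding code_column_def by (intro restrict_ext) simp
  then show ?thesis by simp
next
  case False
  then obtain c0 where c0: "c0 \<in> C" "c0 $ i = 1" by auto
  then have "c0 \<in> A ` C" using A by (simp add: linear_aut_on_def)
  then obtain c1 where c1: "c0 = A c1" "c1 \<in> C" by (rule imageE)
  have "additive_on C (\<lambda>c. A c $ i)"
    using linear_aut_on_add[OF A] by (simp add: additive_on_def)
  with c0 c1 show ?thesis
    using card_column_class_eq[of "\<lambda>c. A c $ i" c1 "\<lambda>c. c $ i" c0] additive_on_coordinate
    by (simp add: code_column_def)
qed

definition pullback :: "(bit ^ 'n \<Rightarrow> bit ^ 'n) \<Rightarrow> 'n \<Rightarrow> 'n" where
  "pullback A i = (THE j. code_column C j = (\<lambda>c\<in>C. A c $ i) \<and> column_rank j = column_rank i)"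

lemma pullback_spec:
  assumes "linear_aut_on C A"
  shows "code_column C (pullback A i) = (\<lambda>c\<in>C. A c $ i) \<and> column_rank (pullback A i) = column_rank i"
proof -
  obtain j where j: "code_column C j = (\<lambda>c\<in>C. A c $ i)" "column_rank j = column_rank i"
    using ex_column_rank[OF card_column_class_linear_aut[OF assms]] by blast
  have "\<exists>!j. code_column C j = (\<lambda>c\<in>C. A c $ i) \<and> column_rank j = column_rank i"
    by (rule ex1I[of _ j]) (use j column_rank_inj in auto)
  then show ?thesis
    unfolding pullback_def by (rule theI')
qed

lemma nth_pullback: "linear_aut_on C A \<Longrightarrow> c \<in> C \<Longrightarrow> c $ pullback A i = A c $ i"
  using pullback_spec[of A i] by (simp add: column_eq_iff)

lemma column_rank_pullback: "linear_aut_on C A \<Longrightarrow> column_rank (pullback A i) = column_rank i"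
  using pullback_spec by blast

lemma pullback_comp:
  assumes A: "linear_aut_on C A" and B: "linear_aut_on C B"
  shows "pullback (A \<circ> B) = pullback B \<circ> pullback A"
proof
  fix i
  have "code_column C (pullback (A \<circ> B) i) = code_column C (pullback B (pullback A i))"
    unfolding code_column_def
    using A B linear_aut_on_comp[OF A B] by (intro restrict_ext) (simp add: nth_pullback linear_aut_on_mem)
  moreover have "column_rank (pullback (A \<circ> B) i) = column_rank (pullback B (pullback A i))"
    using A B linear_aut_on_comp[OF A B] by (simp add: column_rank_pullback)
  ultimately show "pullback (A \<circ> B) i = (pullback B \<circ> pullback A) i"
    by (simp add: column_rank_inj)
qed

lemma inj_pullback:
  assumes A: "linear_aut_on C A"
  shows "inj (pullback A)"
proof
  fix i i' assume eq: "pullback A i = pullback A i'"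
  have "c $ i = c $ i'" if "c \<in> C" for c
  proof -
    have "c \<in> A ` C"
      using A that by (simp add: linear_aut_on_def)
    then obtain d where "c = A d" "d \<in> C" by (rule imageE)
    then show ?thesis
      using nth_pullback[OF A, of d i] nth_pullback[OF A, of d i'] eq by simp
  qed
  then have "code_column C i = code_column C i'"
    unfolding code_column_def by (intro restrict_ext) simp
  moreover have "column_rank i = column_rank i'"
    using column_rank_pullback[OF A, of i] column_rank_pullback[OF A, of i'] eq by simp
  ultimately show "i = i'" by (rule column_rank_inj)
qed

text \<open>The inverse, because \<open>perm_act \<sigma>\<close> reads the coordinates of its argument through \<open>\<sigma>\<^sup>-\<^sup>1\<close>.\<close>
definition code_perm :: "(bit ^ 'n \<Rightarrow> bit ^ 'n) \<Rightarrow> 'n \<Rightarrow> 'n" where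
  "code_perm A = inv_into UNIV (pullback A)"

lemma bij_pullback: "linear_aut_on C A \<Longrightarrow> bij (pullback A)"
  by (simp add: bij_def inj_pullback finite_UNIV_inj_surj)

lemma perm_act_code_perm:
  assumes A: "linear_aut_on C A" and c: "c \<in> C"
  shows "perm_act (code_perm A) c = A c"
proof -
  have "inv_into UNIV (code_perm A) = pullback A"
    using bij_pullback[OF A] by (simp add: code_perm_def inv_inv_eq)
  then show ?thesis
    using nth_pullback[OF A c] by (simp add: perm_act_def vec_eq_iff)
qed

lemma code_perm_PAut:
  assumes A: "linear_aut_on C A"
  shows "code_perm A \<in> PAut C"
proof -
  have "pullback A permutes UNIV"
    using bij_pullback[OF A] by (simp add: permutes_univ bij_iff)
  then have "code_perm A permutes UNIV"
    unfolding code_perm_def by (rule permutes_inv)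
  moreover have "perm_act (code_perm A) ` C = C"
    using A by (simp add: perm_act_code_perm linear_aut_on_def cong: image_cong)
  ultimately show ?thesis by (simp add: PAut_def)
qed

lemma code_perm_comp:
  assumes "linear_aut_on C A" "linear_aut_on C B"
  shows "code_perm (A \<circ> B) = code_perm A \<circ> code_perm B"
  using assms by (simp add: code_perm_def pullback_comp o_inv_distrib bij_pullback)

end

section \<open>The symmetric group on the nonzero points of a plane\<close>

lemma vec_bit_add_eq_iff: "(x :: bit ^ 'n) + y = z \<longleftrightarrow> x + y + z = 0"
  by (metis add_right_cancel vec_bit_add_self)

lemma permutes_atMost3:
  assumes "p permutes {1..3}" and "k \<le> 3"
  shows "p k \<le> 3"
proof (cases "k \<in> {1..3}")
  case True
  then show ?thesis using permutes_in_image[OF assms(1)] by auto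
next
  case False
  then show ?thesis using permutes_not_in[OF assms(1)] assms(2) by simp
qed

locale code_with_dual_pair = binary_code C for C :: "(bit ^ 'n::finite) set" +
  fixes u v :: "bit ^ 'n" and \<alpha> \<beta> :: "bit ^ 'n \<Rightarrow> bit"
  assumes u_mem: "u \<in> C" and v_mem: "v \<in> C"
    and \<alpha>_add: "\<alpha> (x + y) = \<alpha> x + \<alpha> y" and \<beta>_add: "\<beta> (x + y) = \<beta> x + \<beta> y"
    and \<alpha>_u: "\<alpha> u = 1" and \<alpha>_v: "\<alpha> v = 0" and \<beta>_u: "\<beta> u = 0" and \<beta>_v: "\<beta> v = 1"
begin

definition plane_point :: "nat \<Rightarrow> bit ^ 'n" where
  "plane_point k = (if k = 1 then u else if k = 2 then v else if k = 3 then u + v else 0)"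

definition plane_label :: "bit ^ 'n \<Rightarrow> nat" where
  "plane_label c = of_bool (\<alpha> c = 1) + 2 * of_bool (\<beta> c = 1)"

text \<open>\<open>plane_point (plane_label c) = \<alpha> c u + \<beta> c v\<close> is the projection of \<open>c\<close> onto the plane
  along \<open>ker \<alpha> \<inter> ker \<beta>\<close>; \<open>plane_aut p\<close> keeps the other component and moves the projection by
  the permutation \<open>p\<close> of the labels \<open>1, 2, 3\<close> of \<open>u, v, u + v\<close>.\<close>
definition plane_aut :: "(nat \<Rightarrow> nat) \<Rightarrow> bit ^ 'n \<Rightarrow> bit ^ 'n" where
  "plane_aut p c = c + plane_point (plane_label c) + plane_point (p (plane_label c))"

lemma \<alpha>_zero: "\<alpha> 0 = 0" and \<beta>_zero: "\<beta> 0 = 0"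
  using \<alpha>_add[of 0 0] \<beta>_add[of 0 0] by simp_all

lemmas plane_simps = \<alpha>_add \<beta>_add \<alpha>_u \<alpha>_v \<beta>_u \<beta>_v \<alpha>_zero \<beta>_zero

lemma plane_label_le: "plane_label c \<le> 3"
  by (simp add: plane_label_def)

lemma plane_label_point:
  assumes "k \<le> 3"
  shows "plane_label (plane_point k) = k"
proof -
  have "k = 0 \<or> k = 1 \<or> k = 2 \<or> k = 3" using assms by auto
  then show ?thesis
    by (elim disjE) (simp_all add: plane_label_def plane_point_def plane_simps)
qed

lemma plane_label_cong: "\<alpha> x = \<alpha> y \<Longrightarrow> \<beta> x = \<beta> y \<Longrightarrow> plane_label x = plane_label y"
  by (simp add: plane_label_def)

lemma \<alpha>_plane_point_label: "\<alpha> (plane_point (plane_label c)) = \<alpha> c"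
  and \<beta>_plane_point_label: "\<beta> (plane_point (plane_label c)) = \<beta> c"
  by (cases "\<alpha> c"; cases "\<beta> c"; simp add: plane_label_def plane_point_def plane_simps)+

lemma plane_point_mem: "plane_point k \<in> C"
  by (simp add: plane_point_def u_mem v_mem add_mem zero_mem)

lemma plane_aut_mem: "c \<in> C \<Longrightarrow> plane_aut p c \<in> C"
  by (simp add: plane_aut_def add_mem plane_point_mem)

lemma plane_label_plane_aut:
  assumes "p permutes {1..3}"
  shows "plane_label (plane_aut p c) = p (plane_label c)"
proof -
  have "plane_label (plane_aut p c) = plane_label (plane_point (p (plane_label c)))"
    by (rule plane_label_cong)
      (simp_all add: plane_aut_def \<alpha>_add \<beta>_add \<alpha>_plane_point_label \<beta>_plane_point_label)
  also have "\<dots> = p (plane_label c)"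
    using permutes_atMost3[OF assms plane_label_le] by (rule plane_label_point)
  finally show ?thesis .
qed

lemma plane_aut_comp:
  assumes "p permutes {1..3}" and "q permutes {1..3}"
  shows "plane_aut p \<circ> plane_aut q = plane_aut (p \<circ> q)"
proof
  fix c
  have "plane_aut p (plane_aut q c)
      = c + plane_point (plane_label c) + (plane_point (q (plane_label c)) + plane_point (q (plane_label c)))
        + plane_point (p (q (plane_label c)))"
    by (simp add: plane_aut_def[of p] plane_label_plane_aut[OF assms(2)])
      (simp add: plane_aut_def add.assoc)
  then show "(plane_aut p \<circ> plane_aut q) c = plane_aut (p \<circ> q) c"
    by (simp add: plane_aut_def)
qed

lemma plane_aut_id: "plane_aut id = id"
  by (simp add: plane_aut_def fun_eq_iff add.assoc)

lemma plane_aut_point: "k \<le> 3 \<Longrightarrow> plane_aut p (plane_point k) = plane_point (p k)"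
  by (simp add: plane_aut_def plane_label_point add.assoc)

lemma sum_plane_points: "(\<Sum>k\<in>{1..3}. plane_point k) = 0"
proof -
  have "(\<Sum>k\<in>{1..3}. plane_point k) = u + v + (u + v)"
    by (simp add: numeral_3_eq_3 numeral_2_eq_2 plane_point_def)
  also have "\<dots> = 0"
    by (rule vec_bit_add_self)
  finally show ?thesis .
qed

text \<open>Any three distinct nonzero points of the plane sum to zero; this is why every permutation
  of them is linear.\<close>
lemma plane_point_perm_add:
  assumes p: "p permutes {1..3}" and abc: "{a, b, c} = {1..3}" "distinct [a, b, c]"
  shows "plane_point (p a) + plane_point (p b) = plane_point (p c)"
proof -
  have "plane_point (p a) + plane_point (p b) + plane_point (p c) = (\<Sum>k\<in>{a, b, c}. plane_point (p k))"
    using abc(2) by (simp add: add.assoc)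
  also have "\<dots> = (\<Sum>k\<in>{1..3}. plane_point k)"
    using abc(1) sum.permute[OF p, of plane_point] by (simp add: comp_def)
  also have "\<dots> = 0"
    by (rule sum_plane_points)
  finally show ?thesis
    by (rule vec_bit_add_eq_iff[THEN iffD2])
qed

lemma plane_point_perm_label_add:
  assumes p: "p permutes {1..3}"
  shows "plane_point (p (plane_label (x + y)))
    = plane_point (p (plane_label x)) + plane_point (p (plane_label y))"
proof -
  have "plane_point (p 1) + plane_point (p 2) = plane_point (p 3)"
    "plane_point (p 2) + plane_point (p 1) = plane_point (p 3)"
    "plane_point (p 1) + plane_point (p 3) = plane_point (p 2)"
    "plane_point (p 3) + plane_point (p 1) = plane_point (p 2)"
    "plane_point (p 2) + plane_point (p 3) = plane_point (p 1)"
    "plane_point (p 3) + plane_point (p 2) = plane_point (p 1)"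
    by (rule plane_point_perm_add[OF p]; auto)+
  moreover have "plane_point (p 0) = 0"
    using permutes_not_in[OF p] by (simp add: plane_point_def)
  ultimately show ?thesis
    by (cases "\<alpha> x"; cases "\<beta> x"; cases "\<alpha> y"; cases "\<beta> y")
      (simp_all add: plane_label_def \<alpha>_add \<beta>_add numeral_2_eq_2 numeral_3_eq_3)
qed

lemma linear_aut_on_plane_aut:
  assumes p: "p permutes {1..3}"
  shows "linear_aut_on C (plane_aut p)"
  unfolding linear_aut_on_def
proof
  have "plane_aut p (x + y) = plane_aut p x + plane_aut p y" for x y
  proof -
    have "plane_aut p (x + y)
        = (x + y) + (plane_point (plane_label x) + plane_point (plane_label y))
          + (plane_point (p (plane_label x)) + plane_point (p (plane_label y)))"
      using plane_point_perm_label_add[OF p] plane_point_perm_label_add[OF permutes_id]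
      by (simp add: plane_aut_def)
    also have "\<dots> = plane_aut p x + plane_aut p y"
      by (simp add: plane_aut_def add_ac)
    finally show ?thesis .
  qed
  then show "additive_on C (plane_aut p)"
    by (simp add: additive_on_def)
  have "plane_aut p (plane_aut (inv_into UNIV p) c) = c" for c
    using plane_aut_comp[OF p permutes_inv[OF p]] by (simp add: permutes_inv_o[OF p] plane_aut_id fun_eq_iff)
  then have "C \<subseteq> plane_aut p ` C"
    using plane_aut_mem by (metis image_eqI subsetI)
  then show "plane_aut p ` C = C"
    using plane_aut_mem by blast
qed

lemma plane_aut_inj:
  assumes p: "p permutes {1..3}" and q: "q permutes {1..3}"
    and eq: "\<And>c. c \<in> C \<Longrightarrow> plane_aut p c = plane_aut q c"
  shows "p = q"
proof
  fix k
  show "p k = q k"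
  proof (cases "k \<le> 3")
    case True
    then have "plane_point (p k) = plane_point (q k)"
      using eq[OF plane_point_mem, of k] plane_aut_point[OF True, of p] plane_aut_point[OF True, of q]
      by simp
    then have "plane_label (plane_point (p k)) = plane_label (plane_point (q k))"
      by simp
    then show ?thesis
      using True permutes_atMost3[OF p] permutes_atMost3[OF q] by (simp add: plane_label_point)
  next
    case False
    then show ?thesis using permutes_not_in[OF p] permutes_not_in[OF q] by simp
  qed
qed

end

lemma linear_vec_add:
  "Vector_Spaces.linear (*s) (*s) (g :: bit ^ 'n \<Rightarrow> bit ^ 'm) \<Longrightarrow> g (x + y) = g x + g y"
  by (rule module_hom.add[OF Vector_Spaces.linear.axioms(3)])

lemma (in binary_code) ex_dual_pair:
  assumes "vec.dim C \<ge> 2"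
  shows "\<exists>u v \<alpha> \<beta>. code_with_dual_pair C u v \<alpha> \<beta>"
proof -
  obtain B where B: "B \<subseteq> C" "vec.independent B" "C \<subseteq> vec.span B" "card B = vec.dim C"
    by (rule vec.basis_exists)
  then have "\<not> card B \<le> Suc 0" using assms by simp
  then obtain u v where uv: "u \<in> B" "v \<in> B" "u \<noteq> v"
    by (auto simp: card_le_Suc0_iff_eq)
  have ind: "vec.independent {u, v}"
    using vec.independent_mono[OF B(2)] uv by simp
  txt \<open>The dual functionals are coordinates of linear maps into \<open>bit ^ 1\<close>.\<close>
  obtain g :: "_ \<Rightarrow> bit ^ 1" where g: "Vector_Spaces.linear (*s) (*s) g" "g u = 1" "g v = 0"
    using vec.linear_independent_extend[OF ind, of "\<lambda>z. if z = u then 1 else 0"] uv by auto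
  obtain h :: "_ \<Rightarrow> bit ^ 1" where h: "Vector_Spaces.linear (*s) (*s) h" "h u = 0" "h v = 1"
    using vec.linear_independent_extend[OF ind, of "\<lambda>z. if z = v then 1 else 0"] uv by auto
  have "code_with_dual_pair C u v (\<lambda>z. g z $ 1) (\<lambda>z. h z $ 1)"
    using uv B(1) g h by unfold_locales (auto simp: linear_vec_add)
  then show ?thesis by blast
qed

locale plane_in_const_weight_code =
  const_weight_code C w + code_with_dual_pair C u v \<alpha> \<beta>
  for C :: "(bit ^ 'n::finite) set" and w u v \<alpha> \<beta>
begin

lemma plane_perm_hom: "(\<lambda>p. code_perm (plane_aut p)) \<in> hom (sym_group 3) (PAut_group C)"
proof (rule homI)
  show "code_perm (plane_aut p) \<in> carrier (PAut_group C)" if "p \<in> carrier (sym_group 3)" for p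
    using that by (simp add: sym_group_carrier PAut_group_def code_perm_PAut linear_aut_on_plane_aut)
  show "code_perm (plane_aut (p \<otimes>\<^bsub>sym_group 3\<^esub> q))
      = code_perm (plane_aut p) \<otimes>\<^bsub>PAut_group C\<^esub> code_perm (plane_aut q)"
    if "p \<in> carrier (sym_group 3)" "q \<in> carrier (sym_group 3)" for p q
    using that
    by (simp add: sym_group_carrier sym_group_mult PAut_group_mult code_perm_PAut
        linear_aut_on_plane_aut code_perm_comp plane_aut_comp[symmetric])
qed

lemma inj_on_plane_perm: "inj_on (\<lambda>p. code_perm (plane_aut p)) (carrier (sym_group 3))"
proof
  fix p q assume pq: "p \<in> carrier (sym_group 3)" "q \<in> carrier (sym_group 3)"
    and eq: "code_perm (plane_aut p) = code_perm (plane_aut q)"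
  have "plane_aut p c = plane_aut q c" if "c \<in> C" for c
    using pq that arg_cong[OF eq, of "\<lambda>\<sigma>. perm_act \<sigma> c"]
    by (simp add: sym_group_carrier perm_act_code_perm linear_aut_on_plane_aut)
  with pq show "p = q"
    by (simp add: sym_group_carrier plane_aut_inj)
qed

lemma ex_subgroup_iso_sym_group_3:
  "\<exists>H. subgroup H (PAut_group C) \<and> (PAut_group C)\<lparr>carrier := H\<rparr> \<cong> sym_group 3"
  using injective_hom_imp_subgroup_iso[OF sym_group_is_group group_PAut_group
      plane_perm_hom inj_on_plane_perm]
  by blast

end

theorem proposition5p7:
  fixes C :: "(bit ^ 'n::finite) set" and w :: nat
  assumes "lin_const_weight_code w C"
    and "vec.dim C \<ge> 2"
  shows "\<exists>H. subgroup H (PAut_group C) \<and> (PAut_group C)\<lparr>carrier := H\<rparr> \<cong> sym_group 3"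
proof -
  interpret const_weight_code C w
    using assms(1) by unfold_locales (auto simp: lin_const_weight_code_def)
  obtain u v \<alpha> \<beta> where "code_with_dual_pair C u v \<alpha> \<beta>"
    using ex_dual_pair[OF assms(2)] by blast
  then interpret plane_in_const_weight_code C w u v \<alpha> \<beta>
    by (intro_locales) (simp_all add: code_with_dual_pair_def)
  show ?thesis
    by (rule ex_subgroup_iso_sym_group_3)
qed

end
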